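(* Let $C$ be an $E$-linear code of length $2n$. Then: (1) if $C$ is free, $(C^{\perp_{S_L}})^{\perp_{S_L}}=C$; (2) if $C_{Res}=\{0\}$ and $C_{Tor}=\mathbb{F}_2^{2n}$, $(C^{\perp_{S_R}})^{\perp_{S_R}}=C$; (3) $(C^{\perp_S})^{\perp_S}=C$.
   Context: $E=\langle \kappa,\tau \mid 2\kappa=2\tau=0,\ \kappa^2=\kappa,\ \tau^2=\tau,\ \kappa\tau=\kappa,\ \tau\kappa=\tau\rangle$ is the non-unital ring $\{0,\kappa,\tau,\zeta\}$, $\zeta=\kappa+\tau$, with $e\kappa=e\tau=e$, $e\zeta=0$ for all $e\in E$. Every $e\in E$ is uniquely $u\kappa+v\zeta$ ($u,v\in\mathbb{F}_2$); $\pi(u\kappa+v\zeta)=u$, componentwise. An $E$-linear code of length $2n$ is a left $E$-submodule $C\subseteq E^{2n}$; $C_{Res}=\pi(C)$, $C_{Tor}=\{v\in\mathbb{F}_2^{2n}:\zeta v\in C\}$ (componentwise, $0\cdot\zeta=0,1\cdot\zeta=\zeta$); $C$ is free if $C_{Res}=C_{Tor}$. Symplectic inner product: $\langle (u|v),(u'|v')\rangle_s=\sum_i u_iv'_i+\sum_i v_iu'_i$. $C^{\perp_{S_L}}=\{z\in E^{2n}:\langle z,w\rangle_s=0\ \forall w\in C\}$, $C^{\perp_{S_R}}=\{z\in E^{2n}:\langle w,z\rangle_s=0\ \forall w\in C\}$, $C^{\perp_S}=C^{\perp_{S_L}}\cap C^{\perp_{S_R}}$ (all again $E$-linear codes). 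*)

theory Defs
  imports Main
begin

text \<open>The non-unital ring E = {0, kappa, tau, zeta}. Each element is uniquely
  u*kappa + v*zeta with u, v in F_2 (here F_2 = bool, addition = xor).\<close>

datatype E = E0 | Ekappa | Etau | Ezeta

fun Eu :: "E \<Rightarrow> bool" where
  "Eu E0 = False" | "Eu Ekappa = True" | "Eu Etau = True" | "Eu Ezeta = False"

fun Ev :: "E \<Rightarrow> bool" where
  "Ev E0 = False" | "Ev Ekappa = False" | "Ev Etau = True" | "Ev Ezeta = True"

definition Emk :: "bool \<Rightarrow> bool \<Rightarrow> E" where
  "Emk u v = (if u then (if v then Etau else Ekappa) else (if v then Ezeta else E0))"

instantiation E :: "{comm_monoid_add, times}"
begin
definition zero_E :: E where "zero_E = E0"
definition plus_E :: "E \<Rightarrow> E \<Rightarrow> E" where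
  "plus_E a b = Emk (Eu a \<noteq> Eu b) (Ev a \<noteq> Ev b)"
text \<open>a * (u' kappa + v' zeta) = u' a, since e kappa = e tau = e and e zeta = 0.\<close>
definition times_E :: "E \<Rightarrow> E \<Rightarrow> E" where
  "times_E a b = (if Eu b then a else E0)"
instance
proof
  fix a b c :: E
  show "a + b + c = a + (b + c)"
    by (cases a; cases b; cases c) (simp_all add: plus_E_def Emk_def)
  show "a + b = b + a"
    by (cases a; cases b) (simp_all add: plus_E_def Emk_def)
  show "0 + a = a"
    by (cases a) (simp_all add: plus_E_def Emk_def zero_E_def)
qed
end

definition Evecs :: "nat \<Rightarrow> (nat \<Rightarrow> E) set" where
  "Evecs n = {x. \<forall>i\<ge>2*n. x i = 0}"

definition F2vecs :: "nat \<Rightarrow> (nat \<Rightarrow> bool) set" where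
  "F2vecs n = {x. \<forall>i\<ge>2*n. x i = False}"

definition E_linear :: "nat \<Rightarrow> (nat \<Rightarrow> E) set \<Rightarrow> bool" where
  "E_linear n C \<longleftrightarrow> C \<subseteq> Evecs n \<and> (\<lambda>i. 0) \<in> C \<and>
     (\<forall>x\<in>C. \<forall>y\<in>C. (\<lambda>i. x i + y i) \<in> C) \<and>
     (\<forall>e::E. \<forall>x\<in>C. (\<lambda>i. e * x i) \<in> C)"

definition C_Res :: "nat \<Rightarrow> (nat \<Rightarrow> E) set \<Rightarrow> (nat \<Rightarrow> bool) set" where
  "C_Res n C = (\<lambda>x i. Eu (x i)) ` C"

definition zeta_mult :: "(nat \<Rightarrow> bool) \<Rightarrow> (nat \<Rightarrow> E)" where
  "zeta_mult v = (\<lambda>i. if v i then Ezeta else 0)"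

definition C_Tor :: "nat \<Rightarrow> (nat \<Rightarrow> E) set \<Rightarrow> (nat \<Rightarrow> bool) set" where
  "C_Tor n C = {v \<in> F2vecs n. zeta_mult v \<in> C}"

definition is_free :: "nat \<Rightarrow> (nat \<Rightarrow> E) set \<Rightarrow> bool" where
  "is_free n C \<longleftrightarrow> C_Res n C = C_Tor n C"

definition symp :: "nat \<Rightarrow> (nat \<Rightarrow> E) \<Rightarrow> (nat \<Rightarrow> E) \<Rightarrow> E" where
  "symp n x y = (\<Sum>i<n. x i * y (n + i)) + (\<Sum>i<n. x (n + i) * y i)"

definition perpSL :: "nat \<Rightarrow> (nat \<Rightarrow> E) set \<Rightarrow> (nat \<Rightarrow> E) set" where
  "perpSL n C = {z \<in> Evecs n. \<forall>w\<in>C. symp n z w = 0}"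

definition perpSR :: "nat \<Rightarrow> (nat \<Rightarrow> E) set \<Rightarrow> (nat \<Rightarrow> E) set" where
  "perpSR n C = {z \<in> Evecs n. \<forall>w\<in>C. symp n w z = 0}"

definition perpS :: "nat \<Rightarrow> (nat \<Rightarrow> E) set \<Rightarrow> (nat \<Rightarrow> E) set" where
  "perpS n C = perpSL n C \<inter> perpSR n C"

end

(*
  Write e in E as u kappa + v zeta.  Since e * e' = u' e, a vector z in E^{2n} is a pair
  (u z, v z) of binary vectors on which e acts by (u_e u z, v_e u z).  Thus kappa z = (u z, 0),
  zeta z = (0, u z) and z + kappa z = (0, v z), so an E-linear code is the full product
  {z. u z in R, v z in T} of the binary codes R = Res C and T = Tor C, with R contained in T.
  As <z, w>_s = <u z, u w> kappa + <v z, u w> zeta, each complement is again such a product of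
  binary symplectic complements: R^perp x R^perp (left), T^perp x F_2^{2n} (right) and
  T^perp x R^perp (two-sided).  All three claims thus reduce to W^perp^perp = W for binary
  subspaces W, i.e. to separating a vector outside W from W by a linear functional, which is
  built by induction on the length, eliminating the last coordinate with a pivot vector of W.
*)

theory Submission
  imports Defs "HOL-Library.Z2"
begin

(* keep + and * on bit as field operations instead of XOR and AND *)
declare add_bit_eq_xor [simp del] mult_bit_eq_and [simp del]

lemma bit_add_self [simp]: "(a::bit) + a = 0"
  by (cases a) simp_all

definition bit_vecs :: "nat \<Rightarrow> (nat \<Rightarrow> bit) set" where
  "bit_vecs m = {x. \<forall>i\<ge>m. x i = 0}"

definition bdot :: "nat \<Rightarrow> (nat \<Rightarrow> bit) \<Rightarrow> (nat \<Rightarrow> bit) \<Rightarrow> bit" where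
  "bdot m x y = (\<Sum>i<m. x i * y i)"

(* over F_2, closure under addition already gives closure under scalars *)
definition bit_subspace :: "nat \<Rightarrow> (nat \<Rightarrow> bit) set \<Rightarrow> bool" where
  "bit_subspace m W \<longleftrightarrow>
     W \<subseteq> bit_vecs m \<and> (\<lambda>i. 0) \<in> W \<and> (\<forall>x\<in>W. \<forall>y\<in>W. (\<lambda>i. x i + y i) \<in> W)"

definition separates :: "nat \<Rightarrow> (nat \<Rightarrow> bit) \<Rightarrow> (nat \<Rightarrow> bit) set \<Rightarrow> (nat \<Rightarrow> bit) \<Rightarrow> bool" where
  "separates m x W y \<longleftrightarrow> x \<in> bit_vecs m \<and> (\<forall>w\<in>W. bdot m x w = 0) \<and> bdot m x y = 1"

lemma zero_in_bit_vecs [simp]: "(\<lambda>i. 0) \<in> bit_vecs m"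
  by (simp add: bit_vecs_def)

lemma bit_vecs_SucD: "x \<in> bit_vecs (Suc m) \<Longrightarrow> x m = 0 \<Longrightarrow> x \<in> bit_vecs m"
  unfolding bit_vecs_def using le_Suc_eq by auto

lemma bdot_Suc: "bdot (Suc m) x y = bdot m x y + x m * y m"
  by (simp add: bdot_def)

lemma bdot_fun_upd: "bdot m (x(m := c)) y = bdot m x y"
  unfolding bdot_def by (rule sum.cong) auto

lemma bdot_add_right: "bdot m x (\<lambda>i. y i + z i) = bdot m x y + bdot m x z"
  unfolding bdot_def by (simp add: distrib_left sum.distrib)

lemma bdot_scale_right: "bdot m x (\<lambda>i. c * z i) = c * bdot m x z"
  unfolding bdot_def by (simp add: sum_distrib_left mult.left_commute)

lemma bit_subspace_last_zero:
  assumes "bit_subspace (Suc m) W"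
  shows "bit_subspace m {w \<in> W. w m = 0}"
proof -
  have "W \<subseteq> bit_vecs (Suc m)" "(\<lambda>i. 0) \<in> W" "\<forall>x\<in>W. \<forall>y\<in>W. (\<lambda>i. x i + y i) \<in> W"
    using assms by (simp_all add: bit_subspace_def)
  then show ?thesis unfolding bit_subspace_def by (auto intro: bit_vecs_SucD)
qed

lemma separation_without_pivot:
  assumes IH: "\<And>W y. bit_subspace m W \<Longrightarrow> y \<in> bit_vecs m \<Longrightarrow> y \<notin> W \<Longrightarrow> \<exists>x. separates m x W y"
    and W: "bit_subspace (Suc m) W" "\<forall>w\<in>W. w m = 0"
    and y: "y \<in> bit_vecs (Suc m)" "y \<notin> W"
  shows "\<exists>x. separates (Suc m) x W y"
proof (cases "y m = 1")
  case True
  define x where "x = (\<lambda>i. if i = m then (1::bit) else 0)"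
  have "bdot (Suc m) x v = v m" for v
    by (simp add: bdot_Suc bdot_def x_def)
  then have "separates (Suc m) x W y"
    using True W(2) by (auto simp: separates_def bit_vecs_def x_def)
  then show ?thesis by blast
next
  case False
  have "{w \<in> W. w m = 0} = W" using W(2) by blast
  then have "bit_subspace m W" using bit_subspace_last_zero[OF W(1)] by simp
  moreover have "y \<in> bit_vecs m"
    using False y(1) bit_vecs_SucD by simp
  ultimately obtain x where x: "separates m x W y"
    using IH y(2) by blast
  then have "x m = 0" by (simp add: separates_def bit_vecs_def)
  with x have "separates (Suc m) x W y"
    by (auto simp: separates_def bdot_Suc bit_vecs_def)
  then show ?thesis by blast
qed

lemma separation_with_pivot:
  assumes IH: "\<And>W y. bit_subspace m W \<Longrightarrow> y \<in> bit_vecs m \<Longrightarrow> y \<notin> W \<Longrightarrow> \<exists>x. separates m x W y"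
    and W: "bit_subspace (Suc m) W" "w0 \<in> W" "w0 m = 1"
    and y: "y \<in> bit_vecs (Suc m)" "y \<notin> W"
  shows "\<exists>x. separates (Suc m) x W y"
proof -
  have add: "(\<lambda>i. a i + b i) \<in> W" if "a \<in> W" "b \<in> W" for a b
    using W(1) that unfolding bit_subspace_def by blast
  define W' where "W' = {w \<in> W. w m = 0}"
  define y' where "y' = (\<lambda>i. y i + y m * w0 i)"
  have "y' \<in> bit_vecs m"
  proof (rule bit_vecs_SucD)
    have "w0 \<in> bit_vecs (Suc m)" using W(1,2) by (auto simp: bit_subspace_def)
    with y(1) show "y' \<in> bit_vecs (Suc m)" by (simp add: y'_def bit_vecs_def)
    show "y' m = 0" using W(3) by (simp add: y'_def)
  qed
  moreover have "y' \<notin> W'"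
  proof
    assume "y' \<in> W'"
    then have y'_W: "y' \<in> W" by (simp add: W'_def)
    have "y \<in> W"
    proof (cases "y m = 0")
      case True
      then show ?thesis using y'_W by (simp add: y'_def)
    next
      case False
      then have "y = (\<lambda>i. y' i + w0 i)" by (simp add: y'_def add.assoc fun_eq_iff)
      then show ?thesis using add y'_W W(2) by simp
    qed
    with y(2) show False ..
  qed
  ultimately obtain x' where x': "separates m x' W' y'"
    using IH bit_subspace_last_zero[OF W(1)] unfolding W'_def by blast
  define c where "c = bdot m x' w0"
  define x where "x = x'(m := c)"
  have dot_x: "bdot (Suc m) x v = bdot m x' v + c * v m" for v
    by (simp add: bdot_Suc x_def bdot_fun_upd)
  have "bdot (Suc m) x w = 0" if "w \<in> W" for w
  proof (cases "w m = 0")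
    case True
    then show ?thesis using x' that by (simp add: dot_x separates_def W'_def)
  next
    case False
    then have "(\<lambda>i. w i + w0 i) \<in> W'" using add that W(2,3) by (simp add: W'_def)
    then have "bdot m x' (\<lambda>i. w i + w0 i) = 0" using x' by (simp add: separates_def)
    then have "bdot m x' w + c = 0" by (simp add: bdot_add_right c_def)
    then have "bdot m x' w = c" by (metis add.assoc add.right_neutral bit_add_self)
    with False show ?thesis by (simp add: dot_x)
  qed
  moreover have "bdot (Suc m) x y = 1"
  proof -
    have "bdot m x' y + y m * c = 1"
      using x' by (simp add: separates_def y'_def bdot_add_right bdot_scale_right c_def)
    then show ?thesis by (simp add: dot_x mult.commute)
  qed
  moreover have "x \<in> bit_vecs (Suc m)"
    using x' by (auto simp: separates_def bit_vecs_def x_def)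
  ultimately have "separates (Suc m) x W y" by (simp add: separates_def)
  then show ?thesis by blast
qed

lemma bit_subspace_separation:
  assumes "bit_subspace m W" "y \<in> bit_vecs m" "y \<notin> W"
  shows "\<exists>x. separates m x W y"
  using assms
proof (induction m arbitrary: W y)
  case 0
  then show ?case by (auto simp: bit_subspace_def bit_vecs_def fun_eq_iff)
next
  case (Suc m)
  show ?case
  proof (cases "\<exists>w0\<in>W. w0 m = 1")
    case True
    then obtain w0 where "w0 \<in> W" "w0 m = 1" ..
    from separation_with_pivot[OF Suc.IH Suc.prems(1) this Suc.prems(2,3)] show ?thesis .
  next
    case False
    then have "\<forall>w\<in>W. w m = 0" by simp
    from separation_without_pivot[OF Suc.IH Suc.prems(1) this Suc.prems(2,3)] show ?thesis .
  qed
qed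

definition bsymp :: "nat \<Rightarrow> (nat \<Rightarrow> bit) \<Rightarrow> (nat \<Rightarrow> bit) \<Rightarrow> bit" where
  "bsymp n x y = (\<Sum>i<n. x i * y (n + i)) + (\<Sum>i<n. x (n + i) * y i)"

definition bperp :: "nat \<Rightarrow> (nat \<Rightarrow> bit) set \<Rightarrow> (nat \<Rightarrow> bit) set" where
  "bperp n R = {a \<in> bit_vecs (2 * n). \<forall>r\<in>R. bsymp n a r = 0}"

lemma bsymp_commute: "bsymp n x y = bsymp n y x"
  unfolding bsymp_def by (simp add: mult.commute add.commute)

lemma bsymp_add_left: "bsymp n (\<lambda>i. a i + b i) r = bsymp n a r + bsymp n b r"
  unfolding bsymp_def by (simp add: distrib_right sum.distrib algebra_simps)

lemma bsymp_zero_left [simp]: "bsymp n (\<lambda>i. 0) r = 0"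
  by (simp add: bsymp_def)

lemma sum_lessThan_add: "(\<Sum>i<n + k. f i) = (\<Sum>i<n. f i) + (\<Sum>i<k. f (n + i :: nat))"
  by (induction k) (simp_all add: add.assoc)

lemma bsymp_represents_bdot:
  "\<exists>z\<in>bit_vecs (2 * n). \<forall>v. bsymp n z v = bdot (2 * n) x v"
proof
  define z where "z = (\<lambda>i. if i < n then x (n + i) else if i < 2 * n then x (i - n) else 0)"
  show "z \<in> bit_vecs (2 * n)" by (simp add: bit_vecs_def z_def)
  show "\<forall>v. bsymp n z v = bdot (2 * n) x v"
  proof
    fix v
    have "bdot (2 * n) x v = (\<Sum>i<n. x i * v i) + (\<Sum>i<n. x (n + i) * v (n + i))"
      unfolding bdot_def mult_2 by (rule sum_lessThan_add)
    then show "bsymp n z v = bdot (2 * n) x v"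
      by (simp add: bsymp_def z_def add.commute)
  qed
qed

lemma bit_subspace_bperp: "bit_subspace (2 * n) (bperp n R)"
  unfolding bit_subspace_def bperp_def bit_vecs_def by (auto simp: bsymp_add_left)

lemma bperp_antimono: "R \<subseteq> T \<Longrightarrow> bperp n T \<subseteq> bperp n R"
  unfolding bperp_def by auto

lemma bperp_bperp:
  assumes "bit_subspace (2 * n) W"
  shows "bperp n (bperp n W) = W"
proof
  show "W \<subseteq> bperp n (bperp n W)"
    using assms unfolding bperp_def bit_subspace_def by (auto simp: bsymp_commute)
  show "bperp n (bperp n W) \<subseteq> W"
  proof
    fix y assume y: "y \<in> bperp n (bperp n W)"
    show "y \<in> W"
    proof (rule ccontr)
      assume "y \<notin> W"
      moreover have "y \<in> bit_vecs (2 * n)" using y by (simp add: bperp_def)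
      ultimately obtain x where x: "separates (2 * n) x W y"
        using bit_subspace_separation[OF assms] by blast
      obtain z where z: "z \<in> bit_vecs (2 * n)" "\<And>v. bsymp n z v = bdot (2 * n) x v"
        using bsymp_represents_bdot by blast
      have "z \<in> bperp n W" using x z by (simp add: bperp_def separates_def)
      then have "bsymp n y z = 0" using y unfolding bperp_def by blast
      then have "bsymp n z y = 0" by (simp add: bsymp_commute)
      moreover have "bsymp n z y = 1" using x z by (simp add: separates_def)
      ultimately show False by simp
    qed
  qed
qed

lemma bperp_zero: "bperp n {\<lambda>i. 0} = bit_vecs (2 * n)"
  by (auto simp: bperp_def bsymp_def)

lemma bperp_bit_vecs: "bperp n (bit_vecs (2 * n)) = {\<lambda>i. 0}"
proof -
  have "bit_subspace (2 * n) {\<lambda>i. 0}" by (simp add: bit_subspace_def)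
  then show ?thesis using bperp_bperp bperp_zero by metis
qed

definition u_bit :: "E \<Rightarrow> bit" where
  "u_bit e = of_bool (Eu e)"

definition v_bit :: "E \<Rightarrow> bit" where
  "v_bit e = of_bool (Ev e)"

lemma u_bit_add [simp]: "u_bit (a + b) = u_bit a + u_bit b"
  by (cases a; cases b) (simp_all add: u_bit_def plus_E_def Emk_def)

lemma v_bit_add [simp]: "v_bit (a + b) = v_bit a + v_bit b"
  by (cases a; cases b) (simp_all add: v_bit_def plus_E_def Emk_def)

lemma u_bit_mult [simp]: "u_bit (a * b) = u_bit a * u_bit b"
  by (cases a; cases b) (simp_all add: u_bit_def times_E_def)

lemma v_bit_mult [simp]: "v_bit (a * b) = v_bit a * u_bit b"
  by (cases a; cases b) (simp_all add: u_bit_def v_bit_def times_E_def)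

lemma u_bit_zero [simp]: "u_bit 0 = 0"
  by (simp add: u_bit_def zero_E_def)

lemma v_bit_zero [simp]: "v_bit 0 = 0"
  by (simp add: v_bit_def zero_E_def)

lemma bits_kappa_zeta [simp]:
  "u_bit Ekappa = 1" "v_bit Ekappa = 0" "u_bit Ezeta = 0" "v_bit Ezeta = 1"
  by (simp_all add: u_bit_def v_bit_def)

lemma u_bit_sum: "u_bit (sum f A) = (\<Sum>i\<in>A. u_bit (f i))"
  by (induction A rule: infinite_finite_induct) simp_all

lemma v_bit_sum: "v_bit (sum f A) = (\<Sum>i\<in>A. v_bit (f i))"
  by (induction A rule: infinite_finite_induct) simp_all

lemma E_eq_iff_bits: "a = b \<longleftrightarrow> u_bit a = u_bit b \<and> v_bit a = v_bit b"
  by (cases a; cases b) (simp_all add: u_bit_def v_bit_def)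

definition u_part :: "(nat \<Rightarrow> E) \<Rightarrow> nat \<Rightarrow> bit" where
  "u_part z = (\<lambda>i. u_bit (z i))"

definition v_part :: "(nat \<Rightarrow> E) \<Rightarrow> nat \<Rightarrow> bit" where
  "v_part z = (\<lambda>i. v_bit (z i))"

definition E_vec :: "(nat \<Rightarrow> bit) \<Rightarrow> (nat \<Rightarrow> bit) \<Rightarrow> nat \<Rightarrow> E" where
  "E_vec a b = (\<lambda>i. Emk (a i = 1) (b i = 1))"

lemma u_part_E_vec [simp]: "u_part (E_vec a b) = a"
proof
  fix i show "u_part (E_vec a b) i = a i"
    by (cases "a i"; cases "b i") (simp_all add: u_part_def E_vec_def Emk_def u_bit_def)
qed

lemma v_part_E_vec [simp]: "v_part (E_vec a b) = b"
proof
  fix i show "v_part (E_vec a b) i = b i"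
    by (cases "a i"; cases "b i") (simp_all add: v_part_def E_vec_def Emk_def v_bit_def)
qed

lemma E_vec_eq_iff_parts: "z = z' \<longleftrightarrow> u_part z = u_part z' \<and> v_part z = v_part z'"
  unfolding u_part_def v_part_def by (metis E_eq_iff_bits ext)

lemma Evecs_iff_parts: "z \<in> Evecs n \<longleftrightarrow> u_part z \<in> bit_vecs (2 * n) \<and> v_part z \<in> bit_vecs (2 * n)"
  unfolding Evecs_def bit_vecs_def u_part_def v_part_def by (auto simp: E_eq_iff_bits[of _ 0])

lemma symp_eq_zero_iff:
  "symp n z w = 0 \<longleftrightarrow> bsymp n (u_part z) (u_part w) = 0 \<and> bsymp n (v_part z) (u_part w) = 0"
  by (simp add: E_eq_iff_bits[of _ 0] symp_def bsymp_def u_bit_sum v_bit_sum u_part_def v_part_def)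

definition code_of_parts :: "nat \<Rightarrow> (nat \<Rightarrow> bit) set \<Rightarrow> (nat \<Rightarrow> bit) set \<Rightarrow> (nat \<Rightarrow> E) set" where
  "code_of_parts n R T = {z \<in> Evecs n. u_part z \<in> R \<and> v_part z \<in> T}"

lemma E_vec_in_code_of_parts:
  "a \<in> R \<Longrightarrow> b \<in> T \<Longrightarrow> a \<in> bit_vecs (2 * n) \<Longrightarrow> b \<in> bit_vecs (2 * n) \<Longrightarrow>
    E_vec a b \<in> code_of_parts n R T"
  by (auto simp: code_of_parts_def Evecs_iff_parts)

lemma perpSL_code_of_parts:
  assumes "R \<subseteq> bit_vecs (2 * n)" "(\<lambda>i. 0) \<in> T"
  shows "perpSL n (code_of_parts n R T) = code_of_parts n (bperp n R) (bperp n R)"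
proof (intro set_eqI iffI)
  fix z assume z: "z \<in> perpSL n (code_of_parts n R T)"
  have "bsymp n (u_part z) r = 0 \<and> bsymp n (v_part z) r = 0" if "r \<in> R" for r
  proof -
    have "E_vec r (\<lambda>i. 0) \<in> code_of_parts n R T"
      using that assms by (intro E_vec_in_code_of_parts) auto
    then show ?thesis using z by (auto simp: perpSL_def symp_eq_zero_iff)
  qed
  then show "z \<in> code_of_parts n (bperp n R) (bperp n R)"
    using z by (auto simp: perpSL_def code_of_parts_def bperp_def Evecs_iff_parts)
qed (auto simp: code_of_parts_def bperp_def perpSL_def symp_eq_zero_iff)

lemma perpSR_code_of_parts:
  assumes "R \<subseteq> T" "T \<subseteq> bit_vecs (2 * n)" "(\<lambda>i. 0) \<in> R"
  shows "perpSR n (code_of_parts n R T) = code_of_parts n (bperp n T) (bit_vecs (2 * n))"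
proof (intro set_eqI iffI)
  fix z assume z: "z \<in> perpSR n (code_of_parts n R T)"
  have "bsymp n (u_part z) t = 0" if "t \<in> T" for t
  proof -
    have "E_vec (\<lambda>i. 0) t \<in> code_of_parts n R T"
      using that assms by (intro E_vec_in_code_of_parts) auto
    then show ?thesis using z by (auto simp: perpSR_def symp_eq_zero_iff bsymp_commute)
  qed
  then show "z \<in> code_of_parts n (bperp n T) (bit_vecs (2 * n))"
    using z by (auto simp: perpSR_def code_of_parts_def bperp_def Evecs_iff_parts)
qed (use assms in \<open>auto simp: code_of_parts_def bperp_def perpSR_def symp_eq_zero_iff bsymp_commute\<close>)

lemma perpS_code_of_parts:
  assumes "R \<subseteq> T" "T \<subseteq> bit_vecs (2 * n)" "(\<lambda>i. 0) \<in> R"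
  shows "perpS n (code_of_parts n R T) = code_of_parts n (bperp n T) (bperp n R)"
proof -
  have "bperp n T \<subseteq> bperp n R" "bperp n R \<subseteq> bit_vecs (2 * n)"
    using bperp_antimono[OF assms(1)] by (auto simp: bperp_def)
  then show ?thesis
    using assms unfolding perpS_def perpSR_code_of_parts[OF assms]
    by (subst perpSL_code_of_parts) (auto simp: code_of_parts_def)
qed

lemma perpSL_perpSL_code_of_parts:
  assumes "bit_subspace (2 * n) R"
  shows "perpSL n (perpSL n (code_of_parts n R R)) = code_of_parts n R R"
  using assms bit_subspace_bperp[of n R]
  by (simp add: perpSL_code_of_parts bit_subspace_def bperp_bperp)

lemma perpSR_code_of_parts_zero_all:
  "perpSR n (code_of_parts n {\<lambda>i. 0} (bit_vecs (2 * n))) = code_of_parts n {\<lambda>i. 0} (bit_vecs (2 * n))"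
  by (simp add: perpSR_code_of_parts bperp_bit_vecs)

lemma perpS_perpS_code_of_parts:
  assumes "bit_subspace (2 * n) R" "bit_subspace (2 * n) T" "R \<subseteq> T"
  shows "perpS n (perpS n (code_of_parts n R T)) = code_of_parts n R T"
proof -
  have "perpS n (code_of_parts n R T) = code_of_parts n (bperp n T) (bperp n R)"
    using assms by (intro perpS_code_of_parts) (auto simp: bit_subspace_def)
  also have "perpS n \<dots> = code_of_parts n (bperp n (bperp n R)) (bperp n (bperp n T))"
    using bperp_antimono[OF assms(3)] bit_subspace_bperp[of n R] bit_subspace_bperp[of n T]
    by (intro perpS_code_of_parts) (auto simp: bit_subspace_def)
  also have "\<dots> = code_of_parts n R T"
    by (simp add: assms bperp_bperp)
  finally show ?thesis .
qed

definition bits_of :: "(nat \<Rightarrow> bool) \<Rightarrow> nat \<Rightarrow> bit" where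
  "bits_of v = (\<lambda>i. of_bool (v i))"

lemma bits_of_F2vecs: "bits_of ` F2vecs n = bit_vecs (2 * n)"
proof (intro set_eqI iffI)
  fix a assume a: "a \<in> bit_vecs (2 * n)"
  have "a = bits_of (\<lambda>i. a i = 1)"
    by (rule ext) (simp add: bits_of_def of_bool_def)
  moreover have "(\<lambda>i. a i = 1) \<in> F2vecs n" using a by (simp add: F2vecs_def bit_vecs_def)
  ultimately show "a \<in> bits_of ` F2vecs n" by blast
qed (auto simp: bits_of_def F2vecs_def bit_vecs_def)

lemma u_part_image_eq_C_Res: "u_part ` C = bits_of ` C_Res n C"
  unfolding C_Res_def image_image by (simp add: u_part_def bits_of_def u_bit_def)

context
  fixes n C assumes lin: "E_linear n C"
begin

lemma E_linear_add: "x \<in> C \<Longrightarrow> y \<in> C \<Longrightarrow> (\<lambda>i. x i + y i) \<in> C"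
  and E_linear_scale: "x \<in> C \<Longrightarrow> (\<lambda>i. e * x i) \<in> C"
  using lin unfolding E_linear_def by blast+

lemma E_linear_eq_code_of_parts: "C = code_of_parts n (u_part ` C) (v_part ` C)"
proof (intro set_eqI iffI)
  fix z assume "z \<in> C"
  then show "z \<in> code_of_parts n (u_part ` C) (v_part ` C)"
    using lin by (auto simp: code_of_parts_def E_linear_def)
next
  fix z assume "z \<in> code_of_parts n (u_part ` C) (v_part ` C)"
  then obtain a b where ab: "a \<in> C" "b \<in> C" "u_part z = u_part a" "v_part z = v_part b"
    by (auto simp: code_of_parts_def)
  \<comment> \<open>\<open>\<kappa> a\<close> has parts \<open>(u a, 0)\<close> and \<open>b + \<kappa> b\<close> has parts \<open>(0, v b)\<close>\<close>
  define c where "c = (\<lambda>i. Ekappa * a i + (b i + Ekappa * b i))"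
  have "c = z"
    using ab(3,4) by (simp add: E_vec_eq_iff_parts c_def u_part_def v_part_def fun_eq_iff)
  moreover have "c \<in> C"
    unfolding c_def using ab(1,2) by (intro E_linear_add E_linear_scale)
  ultimately show "z \<in> C" by simp
qed

lemma bit_subspace_image:
  assumes "\<And>z. z \<in> Evecs n \<Longrightarrow> p z \<in> bit_vecs (2 * n)"
    and "p (\<lambda>i. 0) = (\<lambda>i. 0)" and "\<And>x y. p (\<lambda>i. x i + y i) = (\<lambda>i. p x i + p y i)"
  shows "bit_subspace (2 * n) (p ` C)"
  unfolding bit_subspace_def
proof (intro conjI ballI)
  show "p ` C \<subseteq> bit_vecs (2 * n)" using lin assms(1) by (auto simp: E_linear_def)
  show "(\<lambda>i. 0) \<in> p ` C" using lin assms(2) by (force simp: E_linear_def)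
  fix x y assume "x \<in> p ` C" "y \<in> p ` C"
  then show "(\<lambda>i. x i + y i) \<in> p ` C" using E_linear_add by (auto simp flip: assms(3))
qed

lemma bit_subspace_u_part_image: "bit_subspace (2 * n) (u_part ` C)"
  by (rule bit_subspace_image) (simp_all add: Evecs_iff_parts u_part_def)

lemma bit_subspace_v_part_image: "bit_subspace (2 * n) (v_part ` C)"
  by (rule bit_subspace_image) (simp_all add: Evecs_iff_parts v_part_def)

lemma u_part_image_subset_v_part_image: "u_part ` C \<subseteq> v_part ` C"
proof
  fix r assume "r \<in> u_part ` C"
  then obtain x where x: "x \<in> C" "r = u_part x" by blast
  have "v_part (\<lambda>i. Ezeta * x i) = r" by (simp add: x v_part_def u_part_def)
  moreover have "(\<lambda>i. Ezeta * x i) \<in> C" using x(1) by (rule E_linear_scale)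
  ultimately show "r \<in> v_part ` C" by force
qed

lemma v_part_image_eq_C_Tor: "v_part ` C = bits_of ` C_Tor n C"
proof (intro set_eqI iffI)
  fix t assume "t \<in> v_part ` C"
  then obtain x where x: "x \<in> C" "t = v_part x" by blast
  define v where "v = (\<lambda>i. Ev (x i))"
  have "v \<in> F2vecs n"
    using lin x(1) by (auto simp: v_def F2vecs_def Evecs_def E_linear_def zero_E_def)
  moreover have "zeta_mult v = (\<lambda>i. x i + Ekappa * x i)"
  proof
    fix i show "zeta_mult v i = x i + Ekappa * x i"
      by (cases "x i") (simp_all add: zeta_mult_def v_def plus_E_def times_E_def Emk_def zero_E_def)
  qed
  moreover have "(\<lambda>i. x i + Ekappa * x i) \<in> C"
    using x(1) by (intro E_linear_add E_linear_scale)
  ultimately have "v \<in> C_Tor n C" by (simp add: C_Tor_def)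
  moreover have "t = bits_of v" by (simp add: x bits_of_def v_def v_part_def v_bit_def)
  ultimately show "t \<in> bits_of ` C_Tor n C" by blast
next
  fix t assume "t \<in> bits_of ` C_Tor n C"
  then obtain v where v: "zeta_mult v \<in> C" "t = bits_of v" by (auto simp: C_Tor_def)
  have "v_part (zeta_mult v) = t"
    by (simp add: v fun_eq_iff v_part_def bits_of_def zeta_mult_def)
  with v show "t \<in> v_part ` C" by force
qed

end

theorem mainTheorem9:
  assumes "E_linear n C"
  shows "(is_free n C \<longrightarrow> perpSL n (perpSL n C) = C)
       \<and> (C_Res n C = {(\<lambda>i. False)} \<and> C_Tor n C = F2vecs n \<longrightarrow> perpSR n (perpSR n C) = C)
       \<and> perpS n (perpS n C) = C"
proof -
  define R T where "R = u_part ` C" and "T = v_part ` C"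
  have C: "C = code_of_parts n R T"
    unfolding R_def T_def using assms by (rule E_linear_eq_code_of_parts)
  have R: "bit_subspace (2 * n) R" and T: "bit_subspace (2 * n) T" and "R \<subseteq> T"
    unfolding R_def T_def using assms
    by (simp_all add: bit_subspace_u_part_image bit_subspace_v_part_image
        u_part_image_subset_v_part_image)
  have R_eq: "R = bits_of ` C_Res n C" and T_eq: "T = bits_of ` C_Tor n C"
    unfolding R_def T_def by (simp_all add: u_part_image_eq_C_Res v_part_image_eq_C_Tor[OF assms])
  have free: "is_free n C \<Longrightarrow> T = R"
    by (simp add: is_free_def R_eq T_eq)
  have zero_all: "C_Res n C = {\<lambda>i. False} \<Longrightarrow> C_Tor n C = F2vecs n \<Longrightarrow>
      R = {\<lambda>i. 0} \<and> T = bit_vecs (2 * n)"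
    using bits_of_F2vecs[of n] by (simp add: R_eq T_eq bits_of_def)
  show ?thesis
  proof (intro conjI impI)
    assume "is_free n C"
    with C free have "C = code_of_parts n R R" by simp
    with perpSL_perpSL_code_of_parts[OF R] show "perpSL n (perpSL n C) = C" by simp
  next
    assume "C_Res n C = {\<lambda>i. False} \<and> C_Tor n C = F2vecs n"
    with C zero_all have "C = code_of_parts n {\<lambda>i. 0} (bit_vecs (2 * n))" by simp
    with perpSR_code_of_parts_zero_all show "perpSR n (perpSR n C) = C" by simp
  next
    show "perpS n (perpS n C) = C"
      unfolding C using R T \<open>R \<subseteq> T\<close> by (rule perpS_perpS_code_of_parts)
  qed
qed

end
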